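(* Let $N\ge1$, $\alpha>0$, $a_k,w_k\in\mathbb{C}$ with $a_k\neq0$ for $k=1,\dots,N$ and $\Re w_k\neq\Re w_l$ for $k\neq l$. For $k=1,\dots,N$, $s=0,\dots,N-1$ let $$A_{k,s}=(-1)^s\sum_{\substack{j_1<\dots<j_s\\ j_l\neq k}} e^{\frac{2\pi}{\alpha}(w_{j_1}+\dots+w_{j_s})},\qquad m_s(\xi)=\sum_{k=1}^N a_kA_{k,s}e^{2\pi\xi w_k}.$$ For $\theta\in\mathbb{R}$ let $B(\theta,N)$ be the $N\times N$ matrix with entries $B_{r,s}=m_{s}(\theta-r)$, $r=0,\dots,N-1$, $s=0,\dots,N-1$. Then $\det B(\theta,N)\neq0$ for every $\theta\in\mathbb{R}$.
   Context: In the definition of $A_{k,s}$ the sum is over all $s$-element subsets $\{j_1,\dots,j_s\}$ of $\{1,\dots,N\}\setminus\{k\}$, with $A_{k,0}=1$. *)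

theory Defs
  imports Complex_Main "Jordan_Normal_Form.Determinant"
begin

definition A_coef :: "nat \<Rightarrow> real \<Rightarrow> (nat \<Rightarrow> complex) \<Rightarrow> nat \<Rightarrow> nat \<Rightarrow> complex" where
  "A_coef N \<alpha> w k s =
     (-1) ^ s * (\<Sum>J\<in>{J. J \<subseteq> {1..N} - {k} \<and> card J = s}.
        exp (complex_of_real (2 * pi / \<alpha>) * (\<Sum>j\<in>J. w j)))"

definition m_fun :: "nat \<Rightarrow> real \<Rightarrow> (nat \<Rightarrow> complex) \<Rightarrow> (nat \<Rightarrow> complex) \<Rightarrow> nat \<Rightarrow> real \<Rightarrow> complex" where
  "m_fun N \<alpha> a w s \<xi> =
     (\<Sum>k=1..N. a k * A_coef N \<alpha> w k s * exp (complex_of_real (2 * pi * \<xi>) * w k))"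

definition B_mat :: "nat \<Rightarrow> real \<Rightarrow> (nat \<Rightarrow> complex) \<Rightarrow> (nat \<Rightarrow> complex) \<Rightarrow> real \<Rightarrow> complex mat" where
  "B_mat N \<alpha> a w \<theta> = mat N N (\<lambda>(r, s). m_fun N \<alpha> a w s (\<theta> - real r))"

end

theory Submission
  imports Defs
begin

(* With u_k = exp (2 pi w_k / alpha) and z_k = exp (-2 pi w_k), the generating polynomial
   of s |-> A_{k,s} is prod_{j <> k} (1 - u_j x), which vanishes at x = 1/u_i for every i <> k.
   Multiplying B on the right by the matrix (u_i^-s)_{s,i} therefore leaves a single exponential
   in each entry: the product is the Vandermonde matrix (z_i^r)_{r,i} times a diagonal matrix with
   entries a_i exp (2 pi theta w_i) prod_{j <> i} (1 - u_j / u_i). Distinct real parts of the w_k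
   make the u_k, and the z_k, pairwise distinct, so both factors are nonsingular. *)

definition vandermonde_mat :: "nat \<Rightarrow> (nat \<Rightarrow> 'a::comm_ring_1) \<Rightarrow> 'a mat" where
  "vandermonde_mat n t = mat n n (\<lambda>(r, k). t k ^ r)"

lemma det_mat_diag: "det (mat_diag n f) = (\<Prod>i<n. f i :: 'a::comm_ring_1)"
proof -
  have "upper_triangular (mat_diag n f)"
    by (rule upper_triangularI) (simp add: mat_diag_def)
  then have "det (mat_diag n f) = prod_list (diag_mat (mat_diag n f))"
    by (rule det_upper_triangular[of _ n]) simp
  then show ?thesis
    by (simp add: prod_list_diag_prod mat_diag_def atLeast0LessThan)
qed

lemma poly_eq_sum_coeff_lessThan:
  fixes x :: "'a::comm_semiring_1"
  assumes "degree p < n"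
  shows "poly p x = (\<Sum>i<n. coeff p i * x ^ i)"
proof -
  have "poly p x = (\<Sum>i\<le>degree p. coeff p i * x ^ i)" by (simp add: poly_altdef)
  also have "\<dots> = (\<Sum>i<n. coeff p i * x ^ i)"
    using assms by (intro sum.mono_neutral_left) (auto simp: coeff_eq_0)
  finally show ?thesis .
qed

(* The coefficient rows of the Lagrange polynomials prod_{j <> i} (X - t_j) invert the
   Vandermonde matrix up to a nonsingular diagonal factor. *)
lemma det_vandermonde_mat_nonzero:
  fixes t :: "nat \<Rightarrow> 'a::field"
  assumes inj: "inj_on t {..<n}"
  shows "det (vandermonde_mat n t) \<noteq> 0"
proof -
  define lag where "lag i = (\<Prod>j\<in>{..<n} - {i}. [:- t j, 1:])" for i
  define L where "L = mat n n (\<lambda>(i, r). coeff (lag i) r)"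
  have poly_lag: "poly (lag i) x = (\<Prod>j\<in>{..<n} - {i}. x - t j)" for i x
    by (simp add: lag_def poly_prod)
  have degree_lag: "degree (lag i) < n" if "i < n" for i
  proof -
    have "degree (lag i) \<le> (\<Sum>j\<in>{..<n} - {i}. degree [:- t j, 1:])"
      unfolding lag_def by (rule degree_prod_sum_le[unfolded o_def]) simp
    also have "\<dots> < n" using that by simp
    finally show ?thesis .
  qed
  have "L * vandermonde_mat n t = mat_diag n (\<lambda>i. poly (lag i) (t i))"
  proof (rule eq_matI)
    fix i k assume "i < dim_row (mat_diag n (\<lambda>i. poly (lag i) (t i)))"
      "k < dim_col (mat_diag n (\<lambda>i. poly (lag i) (t i)))"
    then have i: "i < n" and k: "k < n" by (auto simp: mat_diag_def)
    have "(L * vandermonde_mat n t) $$ (i, k) = poly (lag i) (t k)"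
      using i k degree_lag[OF i]
      by (simp add: L_def vandermonde_mat_def scalar_prod_def atLeast0LessThan
          poly_eq_sum_coeff_lessThan)
    also have "\<dots> = mat_diag n (\<lambda>i. poly (lag i) (t i)) $$ (i, k)"
    proof (cases "i = k")
      case False
      then have "k \<in> {..<n} - {i}" using k by simp
      then have "poly (lag i) (t k) = 0"
        unfolding poly_lag by (intro prod_zero) auto
      then show ?thesis using i k False by (simp add: mat_diag_def)
    qed (use i in \<open>simp add: mat_diag_def\<close>)
    finally show "(L * vandermonde_mat n t) $$ (i, k) = mat_diag n (\<lambda>i. poly (lag i) (t i)) $$ (i, k)" .
  qed (auto simp: L_def vandermonde_mat_def mat_diag_def)
  moreover have "poly (lag i) (t i) \<noteq> 0" if "i < n" for i
    using inj that by (auto simp: poly_lag inj_on_def)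
  ultimately have "det (L * vandermonde_mat n t) \<noteq> 0"
    by (simp add: det_mat_diag)
  moreover have "det (L * vandermonde_mat n t) = det L * det (vandermonde_mat n t)"
    by (rule det_mult[of _ n]) (simp_all add: L_def vandermonde_mat_def)
  ultimately show ?thesis by simp
qed

lemma prod_one_minus_mult_eq_sum:
  fixes u :: "'b \<Rightarrow> 'a::comm_ring_1"
  assumes fin: "finite S" and card: "card S < n"
  shows "(\<Prod>j\<in>S. 1 - u j * x)
    = (\<Sum>s<n. (-1) ^ s * (\<Sum>J\<in>{J. J \<subseteq> S \<and> card J = s}. \<Prod>j\<in>J. u j) * x ^ s)"
proof -
  have "(\<Prod>j\<in>S. 1 - u j * x) = (\<Prod>j\<in>S. - (u j * x) + 1)" by simp
  also have "\<dots> = (\<Sum>J\<in>Pow S. (\<Prod>j\<in>J. - (u j * x)) * (\<Prod>j\<in>S - J. 1))"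
    by (rule prod_add[OF fin])
  also have "\<dots> = (\<Sum>J\<in>Pow S. (-1) ^ card J * (\<Prod>j\<in>J. u j) * x ^ card J)"
  proof (rule sum.cong[OF refl])
    fix J assume "J \<in> Pow S"
    have "(\<Prod>j\<in>J. - (u j * x)) = (\<Prod>j\<in>J. (- x) * u j)" by (simp add: mult.commute)
    also have "\<dots> = (- x) ^ card J * (\<Prod>j\<in>J. u j)" by (simp only: prod.distrib prod_constant)
    finally show "(\<Prod>j\<in>J. - (u j * x)) * (\<Prod>j\<in>S - J. 1) = (-1) ^ card J * (\<Prod>j\<in>J. u j) * x ^ card J"
      by (simp add: power_minus[of x])
  qed
  also have "\<dots> = (\<Sum>s<n. \<Sum>J\<in>{J \<in> Pow S. card J = s}. (-1) ^ card J * (\<Prod>j\<in>J. u j) * x ^ card J)"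
    using fin card by (intro sum.group[symmetric]) (auto intro: le_less_trans card_mono)
  also have "\<dots> = (\<Sum>s<n. (-1) ^ s * (\<Sum>J\<in>{J. J \<subseteq> S \<and> card J = s}. \<Prod>j\<in>J. u j) * x ^ s)"
    by (intro sum.cong refl) (auto simp: sum_distrib_left sum_distrib_right mult_ac intro: sum.cong)
  finally show ?thesis .
qed

lemma sum_prod_one_minus_at_inverse:
  fixes u c :: "'b \<Rightarrow> 'a::field"
  assumes "finite K" "i \<in> K" "u i \<noteq> 0"
  shows "(\<Sum>k\<in>K. c k * (\<Prod>j\<in>K - {k}. 1 - u j * inverse (u i)))
    = c i * (\<Prod>j\<in>K - {i}. 1 - u j * inverse (u i))"
proof -
  have "c k * (\<Prod>j\<in>K - {k}. 1 - u j * inverse (u i)) = 0" if "k \<in> K - {i}" for k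
    using assms that by (auto intro!: bexI[of _ i])
  then have "(\<Sum>k\<in>K - {i}. c k * (\<Prod>j\<in>K - {k}. 1 - u j * inverse (u i))) = 0"
    by (rule sum.neutral[OF ballI])
  then show ?thesis using assms by (simp add: sum.remove[of _ i])
qed

lemma prod_one_minus_at_inverse_nonzero:
  fixes u :: "'b \<Rightarrow> 'a::field"
  assumes "inj_on u K" "i \<in> K" "u i \<noteq> 0"
  shows "(\<Prod>j\<in>K - {i}. 1 - u j * inverse (u i)) \<noteq> 0"
proof -
  have "1 - u j * inverse (u i) \<noteq> 0" if "j \<in> K - {i}" for j
    using assms that by (auto simp: field_simps dest: inj_onD)
  then show ?thesis by (cases "finite K") auto
qed

lemma inj_on_exp_scaled:
  fixes w :: "'b \<Rightarrow> complex"
  assumes "c \<noteq> 0" "inj_on (\<lambda>k. Re (w k)) K"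
  shows "inj_on (\<lambda>k. exp (complex_of_real c * w k)) K"
proof (rule inj_onI)
  fix k l assume "k \<in> K" "l \<in> K" "exp (complex_of_real c * w k) = exp (complex_of_real c * w l)"
  then have "norm (exp (complex_of_real c * w k)) = norm (exp (complex_of_real c * w l))"
    by simp
  then have "exp (c * Re (w k)) = exp (c * Re (w l))" by simp
  then have "Re (w k) = Re (w l)" using assms(1) by simp
  then show "k = l" using assms(2) \<open>k \<in> K\<close> \<open>l \<in> K\<close> by (auto dest: inj_onD)
qed

lemma A_coef_generating_poly:
  assumes "k \<in> {1..N}"
  shows "(\<Sum>s<N. A_coef N \<alpha> w k s * x ^ s)
    = (\<Prod>j\<in>{1..N} - {k}. 1 - exp (complex_of_real (2 * pi / \<alpha>) * w j) * x)"
proof -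
  have "exp (complex_of_real (2 * pi / \<alpha>) * sum w J)
      = (\<Prod>j\<in>J. exp (complex_of_real (2 * pi / \<alpha>) * w j))" if "J \<subseteq> {1..N} - {k}" for J
    using that by (simp add: sum_distrib_left exp_sum finite_subset)
  then have "A_coef N \<alpha> w k s = (-1) ^ s *
      (\<Sum>J\<in>{J. J \<subseteq> {1..N} - {k} \<and> card J = s}. \<Prod>j\<in>J. exp (complex_of_real (2 * pi / \<alpha>) * w j))"
    for s unfolding A_coef_def by (intro arg_cong[where f="(*) _"] sum.cong) auto
  moreover have "card ({1..N} - {k}) < N" using assms by simp
  ultimately show ?thesis by (simp add: prod_one_minus_mult_eq_sum)
qed

lemma B_mat_mult_inverse_powers:
  fixes \<alpha> \<theta> :: real and a w :: "nat \<Rightarrow> complex"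
  defines "u j \<equiv> exp (complex_of_real (2 * pi / \<alpha>) * w j)"
    and "z j \<equiv> exp (complex_of_real (- 2 * pi) * w j)"
  shows "B_mat N \<alpha> a w \<theta> * mat N N (\<lambda>(s, i). inverse (u (Suc i)) ^ s)
    = vandermonde_mat N (\<lambda>i. z (Suc i)) * mat_diag N (\<lambda>i. a (Suc i)
        * exp (complex_of_real (2 * pi * \<theta>) * w (Suc i))
        * (\<Prod>j\<in>{1..N} - {Suc i}. 1 - u j * inverse (u (Suc i))))"
    (is "_ * ?C = ?V * mat_diag N (\<lambda>i. ?c (Suc i))")
proof (rule eq_matI)
  fix r i assume "r < dim_row (?V * mat_diag N (\<lambda>i. ?c (Suc i)))"
    "i < dim_col (?V * mat_diag N (\<lambda>i. ?c (Suc i)))"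
  then have r: "r < N" and i: "i < N" by (auto simp: vandermonde_mat_def mat_diag_def)
  define x where "x = inverse (u (Suc i))"
  have shift: "exp (complex_of_real (2 * pi * (\<theta> - real r)) * w k)
      = exp (complex_of_real (2 * pi * \<theta>) * w k) * z k ^ r" for k
  proof -
    have split: "complex_of_real (2 * pi * (\<theta> - real r)) * w k
        = complex_of_real (2 * pi * \<theta>) * w k + of_nat r * (complex_of_real (- 2 * pi) * w k)"
      by (simp add: algebra_simps)
    show ?thesis unfolding z_def split exp_add exp_of_nat_mult ..
  qed
  have "(B_mat N \<alpha> a w \<theta> * ?C) $$ (r, i) = (\<Sum>s<N. m_fun N \<alpha> a w s (\<theta> - real r) * x ^ s)"
    using r i by (simp add: B_mat_def x_def scalar_prod_def atLeast0LessThan)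
  also have "\<dots> = (\<Sum>s<N. \<Sum>k=1..N. (a k * exp (complex_of_real (2 * pi * \<theta>) * w k) * z k ^ r)
      * (A_coef N \<alpha> w k s * x ^ s))"
    unfolding m_fun_def shift sum_distrib_right by (simp add: mult_ac)
  also have "\<dots> = (\<Sum>k=1..N. (a k * exp (complex_of_real (2 * pi * \<theta>) * w k) * z k ^ r)
      * (\<Sum>s<N. A_coef N \<alpha> w k s * x ^ s))"
    by (subst sum.swap) (simp add: sum_distrib_left)
  also have "\<dots> = (\<Sum>k=1..N. (a k * exp (complex_of_real (2 * pi * \<theta>) * w k) * z k ^ r)
      * (\<Prod>j\<in>{1..N} - {k}. 1 - u j * x))"
    by (intro sum.cong refl) (simp add: A_coef_generating_poly u_def)
  also have "\<dots> = ?c (Suc i) * z (Suc i) ^ r"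
    using i unfolding x_def by (subst sum_prod_one_minus_at_inverse) (auto simp: u_def)
  also have "\<dots> = (?V * mat_diag N (\<lambda>i. ?c (Suc i))) $$ (r, i)"
    using r i by (subst mat_diag_mult_right[of _ N]) (auto simp: vandermonde_mat_def)
  finally show "(B_mat N \<alpha> a w \<theta> * ?C) $$ (r, i) = (?V * mat_diag N (\<lambda>i. ?c (Suc i))) $$ (r, i)" .
qed (auto simp: B_mat_def vandermonde_mat_def mat_diag_def)

theorem lemma5p1:
  fixes N :: nat and \<alpha> :: real and a w :: "nat \<Rightarrow> complex"
  assumes "N \<ge> 1" and "\<alpha> > 0"
    and "\<forall>k\<in>{1..N}. a k \<noteq> 0"
    and "\<forall>k\<in>{1..N}. \<forall>l\<in>{1..N}. k \<noteq> l \<longrightarrow> Re (w k) \<noteq> Re (w l)"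
  shows "\<forall>\<theta>::real. det (B_mat N \<alpha> a w \<theta>) \<noteq> 0"
proof
  fix \<theta> :: real
  define u where "u j = exp (complex_of_real (2 * pi / \<alpha>) * w j)" for j
  define z where "z j = exp (complex_of_real (- 2 * pi) * w j)" for j
  define d where "d i = a (Suc i) * exp (complex_of_real (2 * pi * \<theta>) * w (Suc i))
    * (\<Prod>j\<in>{1..N} - {Suc i}. 1 - u j * inverse (u (Suc i)))" for i
  define C where "C = mat N N (\<lambda>(s, i). inverse (u (Suc i)) ^ s)"
  have Re_w: "inj_on (\<lambda>k. Re (w k)) {1..N}" using assms(4) by (auto intro: inj_onI)
  have u: "inj_on u {1..N}"
    unfolding u_def[abs_def] using Re_w assms(2) by (intro inj_on_exp_scaled) auto
  have "inj_on z {1..N}"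
    unfolding z_def[abs_def] using Re_w by (intro inj_on_exp_scaled) auto
  then have "inj_on (z \<circ> Suc) {..<N}"
    by (intro comp_inj_on) (simp_all add: image_Suc_lessThan)
  then have "det (vandermonde_mat N (\<lambda>i. z (Suc i))) \<noteq> 0"
    using det_vandermonde_mat_nonzero by (simp add: o_def)
  moreover have "d i \<noteq> 0" if "i < N" for i
    using that assms(3) prod_one_minus_at_inverse_nonzero[OF u, of "Suc i"]
    by (simp add: d_def u_def)
  then have "det (mat_diag N d) \<noteq> 0" by (simp add: det_mat_diag)
  moreover have "B_mat N \<alpha> a w \<theta> * C = vandermonde_mat N (\<lambda>i. z (Suc i)) * mat_diag N d"
    unfolding C_def d_def u_def z_def by (rule B_mat_mult_inverse_powers)
  then have "det (B_mat N \<alpha> a w \<theta>) * det C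
      = det (vandermonde_mat N (\<lambda>i. z (Suc i))) * det (mat_diag N d)"
    by (metis det_mult mat_carrier mat_diag_dim B_mat_def C_def vandermonde_mat_def)
  ultimately show "det (B_mat N \<alpha> a w \<theta>) \<noteq> 0" by auto
qed

end
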